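(* Let $V=\bigoplus_{n\ge 0}V_n$ be a VOA over $\mathbb{Q}$ with $\dim V_0=1$, having a nondegenerate invariant bilinear form $\langle\ ,\ \rangle$. Let $J\subseteq V$ be a homogeneous IVOA and let $J^{\circ}=\{u\in V\mid \langle u,J\rangle\subseteq\mathbb{Z}\}$. Then $\frac{L(1)^n}{n!}J^{\circ}\subseteq J^{\circ}$ for all integers $n\ge 0$.
   Context: A VOA over $\mathbb{Q}$ has vacuum $\mathbf{1}$, conformal vector $\omega$, vertex operators $Y(a,z)=\sum_{n}a_nz^{-n-1}$, and $L(n)=\omega_{n+1}$. An invariant bilinear form satisfies $\langle Y(a,z)b,c\rangle=\langle b,Y(e^{zL(1)}(-z^{-2})^{L(0)}a,z^{-1})c\rangle$ (in particular $L(1)$ and $L(-1)$ are adjoint). An integral form (IF) in $V$ is an additive subgroup which is the $\mathbb{Z}$-span of a $\mathbb{Q}$-basis of $V$, closed under all products $a_kb$ ($k\in\mathbb{Z}$), and containing a positive integer multiple of $\mathbf{1}$ and of $\omega$. An IVOA is an IF containing $\mathbf{1}$. $J$ is homogeneous if $J=\bigoplus_n(J\cap V_n)$. *)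

theory Defs
  imports Complex_Main
begin

text \<open>The underlying space is the whole
type 'v, with scalar multiplication sc :: rat => 'v => 'v.  The modes of the vertex
operators are given by md a n b = a_n b (n an integer), i.e. Y(a,z) b = sum_n (md a n b) z^(-n-1).
vac is the vacuum, om the conformal vector, L(n) = om_(n+1).\<close>

definition fsum :: "(nat \<Rightarrow> 'v::comm_monoid_add) \<Rightarrow> 'v" where
  "fsum f = sum f {i. f i \<noteq> 0}"

definition vL :: "('v \<Rightarrow> int \<Rightarrow> 'v \<Rightarrow> 'v) \<Rightarrow> 'v \<Rightarrow> int \<Rightarrow> 'v \<Rightarrow> 'v" where
  "vL md om n = md om (n + 1)"

definition wtsp :: "(rat \<Rightarrow> 'v \<Rightarrow> 'v) \<Rightarrow> ('v \<Rightarrow> int \<Rightarrow> 'v \<Rightarrow> 'v) \<Rightarrow> 'v \<Rightarrow> int \<Rightarrow> 'v set" where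
  "wtsp sc md om n = {v. vL md om 0 v = sc (of_int n) v}"

definition sgn_pow :: "int \<Rightarrow> rat" where
  "sgn_pow r = (if even r then 1 else -1)"

definition is_VOA :: "(rat \<Rightarrow> 'v::ab_group_add \<Rightarrow> 'v) \<Rightarrow> ('v \<Rightarrow> int \<Rightarrow> 'v \<Rightarrow> 'v) \<Rightarrow> 'v \<Rightarrow> 'v \<Rightarrow> bool" where
  "is_VOA sc md vac om \<longleftrightarrow>
     vector_space sc \<and>
     \<comment> \<open>bilinearity of the products\<close>
     (\<forall>a n. Vector_Spaces.linear sc sc (md a n)) \<and>
     (\<forall>n b. Vector_Spaces.linear sc sc (\<lambda>a. md a n b)) \<and>
     \<comment> \<open>truncation: Y(a,z)b has only finitely many negative powers of z\<close>
     (\<forall>a b. \<exists>N. \<forall>n\<ge>N. md a n b = 0) \<and>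
     \<comment> \<open>vacuum: Y(1,z) = id\<close>
     (\<forall>n v. md vac n v = (if n = -1 then v else 0)) \<and>
     \<comment> \<open>creation: Y(a,z)1 \<in> V[[z]] and a_(-1) 1 = a\<close>
     (\<forall>a. md a (-1) vac = a) \<and>
     (\<forall>a n. n \<ge> 0 \<longrightarrow> md a n vac = 0) \<and>
     \<comment> \<open>Jacobi identity (Borcherds identity, component form)\<close>
     (\<forall>a b c p q r.
        fsum (\<lambda>i. sc (of_int p gchoose i) (md (md a (r + int i) b) (p + q - int i) c))
        = fsum (\<lambda>i. sc ((-1) ^ i * (of_int r gchoose i)) (md a (p + r - int i) (md b (q + int i) c)))
          - sc (sgn_pow r)
              (fsum (\<lambda>i. sc ((-1) ^ i * (of_int r gchoose i)) (md b (q + r - int i) (md a (p + int i) c))))) \<and>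
     \<comment> \<open>Virasoro relations with some central charge\<close>
     (\<exists>cc::rat. \<forall>m n v.
        vL md om m (vL md om n v) - vL md om n (vL md om m v)
        = sc (of_int (m - n)) (vL md om (m + n) v)
          + (if m + n = 0 then sc ((of_int m ^ 3 - of_int m) / 12 * cc) v else 0)) \<and>
     \<comment> \<open>L(-1)-derivative property: Y(L(-1)a,z) = d/dz Y(a,z)\<close>
     (\<forall>a n b. md (vL md om (-1) a) n b = sc (- of_int n) (md a (n - 1) b)) \<and>
     \<comment> \<open>om has weight 2\<close>
     om \<in> wtsp sc md om 2 \<and>
     \<comment> \<open>grading: V = direct sum of the L(0)-eigenspaces V_n, n \<ge> 0, each finite-dimensional\<close>
     (\<forall>v. \<exists>S f. finite S \<and> (\<forall>n\<in>S. f n \<in> wtsp sc md om n) \<and> v = sum f S) \<and>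
     (\<forall>n<0. wtsp sc md om n = {0}) \<and>
     (\<forall>n. \<exists>B. finite B \<and> wtsp sc md om n \<subseteq> module.span sc B)"

text \<open>Nondegenerate invariant bilinear form, invariance written in components:
for a \<in> V_k,  <a_n b, c> = (-1)^k sum_j (1/j!) <b, (L(1)^j a)_(2k-n-j-2) c>.\<close>
definition is_nondeg_invariant_form ::
  "(rat \<Rightarrow> 'v::ab_group_add \<Rightarrow> 'v) \<Rightarrow> ('v \<Rightarrow> int \<Rightarrow> 'v \<Rightarrow> 'v) \<Rightarrow> 'v \<Rightarrow> ('v \<Rightarrow> 'v \<Rightarrow> rat) \<Rightarrow> bool" where
  "is_nondeg_invariant_form sc md om bf \<longleftrightarrow>
     (\<forall>u. Vector_Spaces.linear sc (*) (bf u)) \<and>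
     (\<forall>v. Vector_Spaces.linear sc (*) (\<lambda>u. bf u v)) \<and>
     (\<forall>u. (\<forall>v. bf u v = 0) \<longrightarrow> u = 0) \<and>
     (\<forall>v. (\<forall>u. bf u v = 0) \<longrightarrow> v = 0) \<and>
     (\<forall>k a n b c. a \<in> wtsp sc md om k \<longrightarrow>
        bf (md a n b) c
        = sgn_pow k * (\<Sum>j\<in>{0..nat k}.
             (1 / fact j) * bf b (md ((vL md om 1 ^^ j) a) (2 * k - n - int j - 2) c)))"

definition int_span :: "(rat \<Rightarrow> 'v::ab_group_add \<Rightarrow> 'v) \<Rightarrow> 'v set \<Rightarrow> 'v set" where
  "int_span sc B = {sum (\<lambda>b. sc (of_int (c b)) b) S | S c. finite S \<and> S \<subseteq> B}"

definition is_integral_form :: "(rat \<Rightarrow> 'v::ab_group_add \<Rightarrow> 'v) \<Rightarrow> ('v \<Rightarrow> int \<Rightarrow> 'v \<Rightarrow> 'v) \<Rightarrow> 'v \<Rightarrow> 'v \<Rightarrow> 'v set \<Rightarrow> bool" where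
  "is_integral_form sc md vac om J \<longleftrightarrow>
     (\<exists>B. \<not> module.dependent sc B \<and> module.span sc B = UNIV \<and> J = int_span sc B) \<and>
     (\<forall>a\<in>J. \<forall>b\<in>J. \<forall>k. md a k b \<in> J) \<and>
     (\<exists>m::nat. m > 0 \<and> sc (of_nat m) vac \<in> J) \<and>
     (\<exists>m::nat. m > 0 \<and> sc (of_nat m) om \<in> J)"

definition is_IVOA :: "(rat \<Rightarrow> 'v::ab_group_add \<Rightarrow> 'v) \<Rightarrow> ('v \<Rightarrow> int \<Rightarrow> 'v \<Rightarrow> 'v) \<Rightarrow> 'v \<Rightarrow> 'v \<Rightarrow> 'v set \<Rightarrow> bool" where
  "is_IVOA sc md vac om J \<longleftrightarrow> is_integral_form sc md vac om J \<and> vac \<in> J"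

definition is_homogeneous :: "(rat \<Rightarrow> 'v::ab_group_add \<Rightarrow> 'v) \<Rightarrow> ('v \<Rightarrow> int \<Rightarrow> 'v \<Rightarrow> 'v) \<Rightarrow> 'v \<Rightarrow> 'v set \<Rightarrow> bool" where
  "is_homogeneous sc md om J \<longleftrightarrow>
     (\<forall>v\<in>J. \<exists>S f. finite S \<and> (\<forall>n\<in>S. f n \<in> J \<inter> wtsp sc md om n) \<and> v = sum f S)"

definition dual_lattice :: "('v \<Rightarrow> 'v \<Rightarrow> rat) \<Rightarrow> 'v set \<Rightarrow> 'v set" where
  "dual_lattice bf J = {u. \<forall>v\<in>J. bf u v \<in> \<int>}"

end

theory Submission
  imports Defs
begin

text \<open>
  Invariance of the form applied to the conformal vector (of weight 2)
  shows that L(1) is adjoint to L(-1), because L(1) om = 0 makes the correction terms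
  vanish; hence (L(1)^n / n!) is adjoint to (L(-1)^n / n!).  The L(-1)-derivative
  property gives (L(-1)^n / n!) v = v_(-1-n) 1, so an integral form containing the
  vacuum is stable under the divided powers of L(-1).  Finally, a general duality
  principle: if T is adjoint to S and S maps J into J, then T maps the dual lattice
  of J into itself.
\<close>

lemma linear_map_zero: "Vector_Spaces.linear s1 s2 f \<Longrightarrow> f 0 = 0"
  using module_hom.zero linear_iff_module_hom by metis

lemma linear_map_scale: "Vector_Spaces.linear s1 s2 f \<Longrightarrow> f (s1 r x) = s2 r (f x)"
  using module_hom.scale linear_iff_module_hom by metis

lemma VOA_axioms:
  assumes "is_VOA sc md vac om"
  shows VOA_vector_space: "vector_space sc"
    and VOA_linear_mode: "Vector_Spaces.linear sc sc (md a n)"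
    and VOA_linear_mode_left: "Vector_Spaces.linear sc sc (\<lambda>a. md a n b)"
    and VOA_creation: "md a (-1) vac = a"
    and VOA_vacuum_annihilation: "n \<ge> 0 \<Longrightarrow> md a n vac = 0"
    and VOA_virasoro: "\<exists>cc::rat. \<forall>m n v.
        vL md om m (vL md om n v) - vL md om n (vL md om m v)
        = sc (of_int (m - n)) (vL md om (m + n) v)
          + (if m + n = 0 then sc ((of_int m ^ 3 - of_int m) / 12 * cc) v else 0)"
    and VOA_derivative: "md (vL md om (-1) a) n b = sc (- of_int n) (md a (n - 1) b)"
    and VOA_omega_weight: "om \<in> wtsp sc md om 2"
proof -
  note V = assms[unfolded is_VOA_def]
  show "vector_space sc" using V by (elim conjE) blast
  show "Vector_Spaces.linear sc sc (md a n)" using V by (elim conjE) blast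
  show "Vector_Spaces.linear sc sc (\<lambda>a. md a n b)" using V by (elim conjE) blast
  show "md a (-1) vac = a" using V by (elim conjE) blast
  show "n \<ge> 0 \<Longrightarrow> md a n vac = 0" using V by (elim conjE) blast
  show "\<exists>cc::rat. \<forall>m n v.
        vL md om m (vL md om n v) - vL md om n (vL md om m v)
        = sc (of_int (m - n)) (vL md om (m + n) v)
          + (if m + n = 0 then sc ((of_int m ^ 3 - of_int m) / 12 * cc) v else 0)"
    using V by (elim conjE) blast
  show "md (vL md om (-1) a) n b = sc (- of_int n) (md a (n - 1) b)"
    using V by (elim conjE) fast
  show "om \<in> wtsp sc md om 2" using V by (elim conjE) blast
qed

lemma invariant_form_axioms:
  assumes "is_nondeg_invariant_form sc md om bf"
  shows invariant_form_linear_left: "Vector_Spaces.linear sc (*) (\<lambda>u. bf u v)"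
    and invariant_form_linear_right: "Vector_Spaces.linear sc (*) (bf u)"
    and invariant_form_invariance: "a \<in> wtsp sc md om k \<Longrightarrow>
        bf (md a n b) c = sgn_pow k * (\<Sum>j\<in>{0..nat k}.
             (1 / fact j) * bf b (md ((vL md om 1 ^^ j) a) (2 * k - n - int j - 2) c))"
proof -
  note F = assms[unfolded is_nondeg_invariant_form_def]
  show "Vector_Spaces.linear sc (*) (\<lambda>u. bf u v)" using F by (elim conjE) blast
  show "Vector_Spaces.linear sc (*) (bf u)" using F by (elim conjE) blast
  show "a \<in> wtsp sc md om k \<Longrightarrow>
        bf (md a n b) c = sgn_pow k * (\<Sum>j\<in>{0..nat k}.
             (1 / fact j) * bf b (md ((vL md om 1 ^^ j) a) (2 * k - n - int j - 2) c))"
    using F by (elim conjE) blast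
qed

text \<open>L(1) annihilates the conformal vector: om = L(-2) 1 and [L(1), L(-2)] = 3 L(-1),
  while both L(1) and L(-1) kill the vacuum.\<close>
lemma VOA_L1_omega:
  assumes "is_VOA sc md vac om"
  shows "vL md om 1 om = 0"
proof -
  interpret vector_space sc by (rule VOA_vector_space[OF assms])
  obtain cc :: rat where vir: "\<And>m n v. vL md om m (vL md om n v) - vL md om n (vL md om m v)
        = sc (of_int (m - n)) (vL md om (m + n) v)
          + (if m + n = 0 then sc ((of_int m ^ 3 - of_int m) / 12 * cc) v else 0)"
    using VOA_virasoro[OF assms] by blast
  have om_eq: "om = vL md om (-2) vac" by (simp add: vL_def VOA_creation[OF assms])
  have L1_vac: "vL md om 1 vac = 0" and Lm1_vac: "vL md om (-1) vac = 0"
    by (simp_all add: vL_def VOA_vacuum_annihilation[OF assms])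
  have "vL md om 1 (vL md om (-2) vac) - vL md om (-2) (vL md om 1 vac)
      = sc (of_int 3) (vL md om (-1) vac)"
    using vir[of 1 "-2" vac] by simp
  moreover have "vL md om (-2) (vL md om 1 vac) = 0"
    using L1_vac linear_map_zero[OF VOA_linear_mode[OF assms]] by (simp add: vL_def)
  ultimately show ?thesis using Lm1_vac om_eq by simp
qed

lemma VOA_L1_pow_omega:
  assumes "is_VOA sc md vac om" and "j \<ge> 1"
  shows "(vL md om 1 ^^ j) om = 0"
  using assms(2)
proof (induction j)
  case 0
  then show ?case by simp
next
  case (Suc j)
  show ?case
  proof (cases "j = 0")
    case True
    then show ?thesis using VOA_L1_omega[OF assms(1)] by simp
  next
    case False
    then have "(vL md om 1 ^^ j) om = 0" using Suc by simp
    then show ?thesis using linear_map_zero[OF VOA_linear_mode[OF assms(1)]] by (simp add: vL_def)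
  qed
qed

text \<open>Invariance for a = om (weight 2, n = 2): the terms involving L(1)^j om, j \<ge> 1,
  vanish, leaving <L(1) b, c> = <b, L(-1) c>.\<close>
lemma invariant_form_L1_adjoint:
  assumes "is_VOA sc md vac om" and "is_nondeg_invariant_form sc md om bf"
  shows "bf (vL md om 1 b) c = bf b (vL md om (-1) c)"
proof -
  have mode_zero: "\<And>n c. md 0 n c = 0"
    using linear_map_zero[OF VOA_linear_mode_left[OF assms(1)]] by blast
  have "bf (md om 2 b) c = sgn_pow 2 * (\<Sum>j\<in>{0..nat 2}.
           (1 / fact j) * bf b (md ((vL md om 1 ^^ j) om) (2 * 2 - 2 - int j - 2) c))"
    by (rule invariant_form_invariance[OF assms(2) VOA_omega_weight[OF assms(1)]])
  also have "{0..nat 2} = {0, 1, 2::nat}" by auto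
  finally have "bf (md om 2 b) c = bf b (md om 0 c) + bf b (md ((vL md om 1 ^^ 1) om) (-1) c)
      + (1/2) * bf b (md ((vL md om 1 ^^ 2) om) (-2) c)"
    by (simp add: sgn_pow_def numeral_2_eq_2)
  then show ?thesis
    using VOA_L1_pow_omega[OF assms(1), of 1] VOA_L1_pow_omega[OF assms(1), of 2]
      mode_zero linear_map_zero[OF invariant_form_linear_right[OF assms(2)]]
    by (simp add: vL_def)
qed

lemma adjoint_funpow:
  assumes "\<And>b c. bf (T b) c = bf b (S c)"
  shows "bf ((T ^^ n) b) c = bf b ((S ^^ n) c)"
proof (induction n arbitrary: c)
  case 0
  then show ?case by simp
next
  case (Suc n)
  have "bf ((T ^^ Suc n) b) c = bf ((T ^^ n) b) (S c)" using assms by simp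
  also have "\<dots> = bf b ((S ^^ n) (S c))" by (rule Suc)
  also have "\<dots> = bf b ((S ^^ Suc n) c)" by (simp add: funpow_swap1)
  finally show ?case .
qed

lemma VOA_Lm1_pow_mode:
  assumes "is_VOA sc md vac om"
  shows "md ((vL md om (-1) ^^ n) a) (-1) b = sc (fact n) (md a (-1 - int n) b)"
proof (induction n arbitrary: a)
  interpret vector_space sc by (rule VOA_vector_space[OF assms])
  case 0
  show ?case by simp
next
  interpret vector_space sc by (rule VOA_vector_space[OF assms])
  case (Suc n)
  have "md ((vL md om (-1) ^^ Suc n) a) (-1) b
      = md ((vL md om (-1) ^^ n) (vL md om (-1) a)) (-1) b"
    by (simp add: funpow_swap1)
  also have "\<dots> = sc (fact n) (md (vL md om (-1) a) (-1 - int n) b)" by (rule Suc)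
  also have "\<dots> = sc (fact n) (sc (- of_int (-1 - int n)) (md a (-1 - int n - 1) b))"
    by (simp add: VOA_derivative[OF assms])
  also have "\<dots> = sc (fact (Suc n)) (md a (-1 - int (Suc n)) b)"
    by (simp add: algebra_simps)
  finally show ?case .
qed

lemma VOA_divided_Lm1_pow:
  assumes "is_VOA sc md vac om"
  shows "sc (1 / fact n) ((vL md om (-1) ^^ n) v) = md v (-1 - int n) vac"
proof -
  interpret vector_space sc by (rule VOA_vector_space[OF assms])
  have "(vL md om (-1) ^^ n) v = md ((vL md om (-1) ^^ n) v) (-1) vac"
    by (simp add: VOA_creation[OF assms])
  also have "\<dots> = sc (fact n) (md v (-1 - int n) vac)"
    by (rule VOA_Lm1_pow_mode[OF assms])
  finally show ?thesis by simp
qed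

lemma IVOA_divided_Lm1_closed:
  assumes "is_VOA sc md vac om" and "is_IVOA sc md vac om J" and "v \<in> J"
  shows "sc (1 / fact n) ((vL md om (-1) ^^ n) v) \<in> J"
proof -
  note I = assms(2)[unfolded is_IVOA_def is_integral_form_def]
  have "\<And>a b k. a \<in> J \<Longrightarrow> b \<in> J \<Longrightarrow> md a k b \<in> J" using I by (elim conjE) blast
  moreover have "vac \<in> J" using I by (elim conjE) blast
  ultimately show ?thesis
    using assms(3) by (simp add: VOA_divided_Lm1_pow[OF assms(1)])
qed

lemma dual_lattice_stable:
  assumes "\<And>u v. bf (T u) v = bf u (S v)"
    and "\<And>v. v \<in> J \<Longrightarrow> S v \<in> J"
    and "u \<in> dual_lattice bf J"
  shows "T u \<in> dual_lattice bf J"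
  using assms unfolding dual_lattice_def by auto

theorem lemma2p2:
  fixes sc :: "rat \<Rightarrow> 'v::ab_group_add \<Rightarrow> 'v"
    and md :: "'v \<Rightarrow> int \<Rightarrow> 'v \<Rightarrow> 'v"
    and vac om :: 'v
    and bf :: "'v \<Rightarrow> 'v \<Rightarrow> rat"
    and J :: "'v set"
  assumes "is_VOA sc md vac om"
    and "vector_space.dim sc (wtsp sc md om 0) = 1"
    and "is_nondeg_invariant_form sc md om bf"
    and "is_IVOA sc md vac om J"
    and "is_homogeneous sc md om J"
  shows "\<forall>n::nat. \<forall>u\<in>dual_lattice bf J.
           sc (1 / fact n) ((vL md om 1 ^^ n) u) \<in> dual_lattice bf J"
proof (intro allI ballI)
  fix n :: nat and u
  assume u: "u \<in> dual_lattice bf J"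
  have pow_adj: "bf ((vL md om 1 ^^ n) a) c = bf a ((vL md om (-1) ^^ n) c)" for a c
    by (rule adjoint_funpow) (rule invariant_form_L1_adjoint[OF assms(1,3)])
  have divided_adj: "bf (sc (1 / fact n) ((vL md om 1 ^^ n) a)) c
      = bf a (sc (1 / fact n) ((vL md om (-1) ^^ n) c))" for a c
    using linear_map_scale[OF invariant_form_linear_left[OF assms(3)]]
      linear_map_scale[OF invariant_form_linear_right[OF assms(3)]] pow_adj by simp
  show "sc (1 / fact n) ((vL md om 1 ^^ n) u) \<in> dual_lattice bf J"
    using dual_lattice_stable[OF divided_adj IVOA_divided_Lm1_closed[OF assms(1,4)] u] .
qed

end
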